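(* Consider the autonomous system $\ddot q^{a}=-\Gamma^{a}_{bc}(q)\dot q^{b}\dot q^{c}-Q^{a}(q)$ on a (pseudo-)Riemannian manifold with metric $\gamma_{ab}$. Let $m\ge 3$, let $\lambda\neq 0$ be a constant, and for $r=1,\dots,m-1$ let $L_{i_1\dots i_r}(q)$ be totally symmetric $r$-rank tensor fields such that $L_{(i_1\dots i_{m-1};i_m)}$ is an $m$th-order Killing tensor and \begin{align*} &L_{(i_1\dots i_{m-2};i_{m-1})}=-\tfrac{m}{\lambda}L_{(i_1\dots i_{m-1};i_m)}Q^{i_m}-\lambda L_{i_1\dots i_{m-1}},\\ &L_{(i_1\dots i_{r-1};i_r)}=(r+1)L_{i_1\dots i_r i_{r+1}}Q^{i_{r+1}}-\lambda L_{i_1\dots i_r},\quad r=2,\dots,m-2,\\ &\big(L_{c}Q^{c}\big)_{,i_1}=2\lambda L_{i_1i_2}Q^{i_2}-\lambda^{2}L_{i_1}. \end{align*} Then $$I^{(m)}_e=\frac{e^{\lambda t}}{\lambda}\Big(-L_{(i_1\dots i_{m-1};i_m)}\dot q^{i_1}\cdots\dot q^{i_m}+\lambda\sum_{r=1}^{m-1}L_{i_1\dots i_r}\dot q^{i_1}\cdots\dot q^{i_r}+L_{i_1}Q^{i_1}\Big)$$ is a first integral of the system.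
   Context: Indices are raised and lowered with $\gamma_{ab}$; Einstein summation convention; $\Gamma^a_{bc}$ are the Christoffel symbols of $\gamma_{ab}$; a comma denotes a partial derivative, a semicolon the Levi-Civita covariant derivative, round brackets around indices denote normalized total symmetrization. A totally symmetric tensor $K_{i_1\dots i_p}$ is a $p$th-order Killing tensor if $K_{(i_1\dots i_p;i_{p+1})}=0$. For $m=3$ the conditions with $r=2,\dots,m-2$ are vacuous. A first integral is a function of $(t,q,\dot q)$ constant along all solutions. *)

theory Defs
  imports "HOL-Analysis.Analysis" "HOL-Library.Multiset"
begin

text \<open>Everything is written in a local coordinate chart: an open set U of real^'n
 (coordinates q^1..q^n, indices of type 'n). Covariant tensor fields of rank r are
 functions  real^'n => 'n list => real  evaluated on index lists of length r.\<close>

definition pd :: "(real^'n \<Rightarrow> real) \<Rightarrow> 'n \<Rightarrow> real^'n \<Rightarrow> real" where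
  "pd f i x = frechet_derivative f (at x) (axis i 1)"

fun iter_pd :: "'n list \<Rightarrow> (real^'n \<Rightarrow> real) \<Rightarrow> real^'n \<Rightarrow> real" where
  "iter_pd [] f = f"
| "iter_pd (i # is) f = pd (iter_pd is f) i"

definition smooth_on :: "(real^'n) set \<Rightarrow> (real^'n \<Rightarrow> real) \<Rightarrow> bool" where
  "smooth_on U f \<longleftrightarrow> (\<forall>is. \<forall>x\<in>U. iter_pd is f differentiable (at x))"

definition metric_inv :: "(real^'n \<Rightarrow> 'n \<Rightarrow> 'n \<Rightarrow> real) \<Rightarrow> real^'n \<Rightarrow> 'n \<Rightarrow> 'n \<Rightarrow> real" where
  "metric_inv g x a b = matrix_inv (\<chi> i j. g x i j) $ a $ b"

definition christoffel :: "(real^'n \<Rightarrow> 'n \<Rightarrow> 'n \<Rightarrow> real) \<Rightarrow> real^'n \<Rightarrow> 'n \<Rightarrow> 'n \<Rightarrow> 'n \<Rightarrow> real" where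
  "christoffel g x a b c = (1/2) * (\<Sum>d\<in>UNIV. metric_inv g x a d *
      (pd (\<lambda>y. g y d b) c x + pd (\<lambda>y. g y d c) b x - pd (\<lambda>y. g y b c) d x))"

definition cov :: "(real^'n \<Rightarrow> 'n \<Rightarrow> 'n \<Rightarrow> real) \<Rightarrow> (real^'n \<Rightarrow> 'n list \<Rightarrow> real)
                   \<Rightarrow> real^'n \<Rightarrow> 'n list \<Rightarrow> 'n \<Rightarrow> real" where
  "cov g T x is j = pd (\<lambda>y. T y is) j x
     - (\<Sum>k<length is. \<Sum>d\<in>UNIV. christoffel g x d (is ! k) j * T x (is[k := d]))"

definition symz :: "('n list \<Rightarrow> real) \<Rightarrow> 'n list \<Rightarrow> real" where
  "symz T is = (1 / fact (length is)) *
     (\<Sum>\<sigma>\<in>{\<sigma>. \<sigma> permutes {..<length is}}. T (map (\<lambda>k. is ! \<sigma> k) [0..<length is]))"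

definition symcov :: "(real^'n \<Rightarrow> 'n \<Rightarrow> 'n \<Rightarrow> real) \<Rightarrow> (real^'n \<Rightarrow> 'n list \<Rightarrow> real)
                      \<Rightarrow> real^'n \<Rightarrow> 'n list \<Rightarrow> real" where
  "symcov g T x is = symz (\<lambda>js. cov g T x (butlast js) (last js)) is"

definition totally_symmetric :: "(real^'n) set \<Rightarrow> nat \<Rightarrow> (real^'n \<Rightarrow> 'n list \<Rightarrow> real) \<Rightarrow> bool" where
  "totally_symmetric U p K \<longleftrightarrow>
     (\<forall>x\<in>U. \<forall>is js. length is = p \<longrightarrow> mset js = mset is \<longrightarrow> K x js = K x is)"

definition killing_tensor :: "(real^'n \<Rightarrow> 'n \<Rightarrow> 'n \<Rightarrow> real) \<Rightarrow> (real^'n) set \<Rightarrow> nat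
                              \<Rightarrow> (real^'n \<Rightarrow> 'n list \<Rightarrow> real) \<Rightarrow> bool" where
  "killing_tensor g U p K \<longleftrightarrow> totally_symmetric U p K \<and>
     (\<forall>x\<in>U. \<forall>is. length is = p + 1 \<longrightarrow> symcov g K x is = 0)"

definition contr :: "nat \<Rightarrow> ('n::finite list \<Rightarrow> real) \<Rightarrow> real^'n \<Rightarrow> real" where
  "contr r T v = (\<Sum>is\<in>{is::'n list. length is = r}. T is * prod_list (map (\<lambda>i. v $ i) is))"

definition is_solution :: "(real^'n \<Rightarrow> 'n \<Rightarrow> 'n \<Rightarrow> real) \<Rightarrow> (real^'n \<Rightarrow> 'n \<Rightarrow> real) \<Rightarrow> (real^'n) set
      \<Rightarrow> real set \<Rightarrow> (real \<Rightarrow> real^'n) \<Rightarrow> (real \<Rightarrow> real^'n) \<Rightarrow> bool" where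
  "is_solution g Q U J q v \<longleftrightarrow>
     (\<forall>t\<in>J. q t \<in> U \<and> (q has_vector_derivative v t) (at t) \<and>
        (v has_vector_derivative
           (\<chi> a. - (\<Sum>b\<in>UNIV. \<Sum>c\<in>UNIV. christoffel g (q t) a b c * v t $ b * v t $ c) - Q (q t) a))
          (at t))"

end

theory Submission
  imports Defs
begin

(* Along a solution, d/dt (T_{i1..ir} v^i1...v^ir) = T_{(i1..ir;i)} v^i1...v^ir v^i
   - r T_{i1..i(r-1)c} Q^c v^i1...v^i(r-1) for every totally symmetric T: the Christoffel part of
   the acceleration turns partial into covariant derivatives, and the force part lowers the degree
   by one. For the bracket F of I_e the Killing condition removes the top derivative, and the
   hypotheses on L make the remaining terms telescope to dF/dt = -lam F, so exp (lam t) F is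
   constant. *)

lemma matrix_inv_entry_cramer:
  fixes A :: "real^'n^'n"
  assumes "det A \<noteq> 0"
  shows "matrix_inv A $ a $ b = det (\<chi> i j. if j = a then axis b 1 $ i else A $ i $ j) / det A"
proof -
  have "invertible A"
    using assms invertible_det_nz by blast
  then have "A ** matrix_inv A = mat 1"
    unfolding invertible_def matrix_inv_def by (metis (mono_tags, lifting) someI_ex)
  define x where "x = (\<chi> k. matrix_inv A $ k $ b)"
  have "A *v x = (A ** matrix_inv A) *v axis b 1"
    by (simp add: x_def vec_eq_iff matrix_vector_mult_def matrix_matrix_mult_def axis_def
        sum_distrib_left if_distrib cong: if_cong)
  with \<open>A ** matrix_inv A = mat 1\<close> have "A *v x = axis b 1" by simp
  then have "x = (\<chi> k. det (\<chi> i j. if j = k then axis b 1 $ i else A $ i $ j) / det A)"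
    using cramer[OF assms] by blast
  then show ?thesis by (simp add: x_def vec_eq_iff)
qed

lemma differentiable_prod:
  fixes f :: "'i \<Rightarrow> 'a::real_normed_vector \<Rightarrow> real"
  assumes "\<And>i. i \<in> I \<Longrightarrow> f i differentiable (at x)"
  shows "(\<lambda>y. \<Prod>i\<in>I. f i y) differentiable (at x)"
proof -
  from assms obtain f' where "\<And>i. i \<in> I \<Longrightarrow> (f i has_derivative f' i) (at x)"
    unfolding differentiable_def by metis
  then show ?thesis unfolding differentiable_def by (blast intro: has_derivative_prod)
qed

lemma differentiable_det:
  fixes F :: "'a::real_normed_vector \<Rightarrow> 'n::finite \<Rightarrow> 'n \<Rightarrow> real"
  assumes "\<And>i j. (\<lambda>y. F y i j) differentiable (at x)"
  shows "(\<lambda>y. det (\<chi> i j. F y i j)) differentiable (at x)"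
  unfolding det_def by (auto intro!: differentiable_sum differentiable_prod assms)

lemma smooth_on_differentiable: "smooth_on U f \<Longrightarrow> x \<in> U \<Longrightarrow> f differentiable (at x)"
  unfolding smooth_on_def by (metis iter_pd.simps(1))

lemma smooth_on_pd_differentiable: "smooth_on U f \<Longrightarrow> x \<in> U \<Longrightarrow> pd f j differentiable (at x)"
  unfolding smooth_on_def by (metis iter_pd.simps)

lemma metric_inv_differentiable:
  fixes g :: "real^'n \<Rightarrow> 'n \<Rightarrow> 'n \<Rightarrow> real"
  assumes U: "open U" and g_smooth: "\<And>i j. smooth_on U (\<lambda>x. g x i j)"
    and g_nondeg: "\<And>x. x \<in> U \<Longrightarrow> det (\<chi> i j. g x i j) \<noteq> 0" and x: "x \<in> U"
  shows "(\<lambda>y. metric_inv g y a b) differentiable (at x)"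
proof -
  define f where
    "f y = det (\<chi> i j. if j = a then axis b 1 $ i else g y i j) / det (\<chi> i j. g y i j)" for y
  have g_diff: "(\<lambda>y. g y i j) differentiable (at x)" for i j
    using g_smooth x smooth_on_differentiable by blast
  have "(\<lambda>y. if j = a then axis b 1 $ i else g y i j) differentiable (at x)" for i j
    by (cases "j = a") (simp_all add: g_diff)
  then have "f differentiable (at x)"
    unfolding f_def using g_nondeg[OF x] by (intro differentiable_divide differentiable_det g_diff)
  then obtain f' where "(f has_derivative f') (at x)"
    unfolding differentiable_def by blast
  moreover have "f y = metric_inv g y a b" if "y \<in> U" for y
  proof -
    have "(\<chi> i j. if j = a then axis b 1 $ i else (\<chi> i j. g y i j) $ i $ j)
        = (\<chi> i j. if j = a then axis b 1 $ i else g y i j)"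
      by (simp add: vec_eq_iff)
    then show ?thesis
      using matrix_inv_entry_cramer[OF g_nondeg[OF that], of a b] by (simp add: f_def metric_inv_def)
  qed
  ultimately have "((\<lambda>y. metric_inv g y a b) has_derivative f') (at x)"
    by (rule has_derivative_transform_within_open[OF _ U x])
  then show ?thesis unfolding differentiable_def by blast
qed

lemma christoffel_differentiable:
  fixes g :: "real^'n \<Rightarrow> 'n \<Rightarrow> 'n \<Rightarrow> real"
  assumes "open U" and g_smooth: "\<And>i j. smooth_on U (\<lambda>x. g x i j)"
    and "\<And>x. x \<in> U \<Longrightarrow> det (\<chi> i j. g x i j) \<noteq> 0" and x: "x \<in> U"
  shows "(\<lambda>y. christoffel g y a b c) differentiable (at x)"
  unfolding christoffel_def
  by (intro differentiable_mult differentiable_const differentiable_sum ballI finite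
      metric_inv_differentiable[OF assms] differentiable_add differentiable_diff
      smooth_on_pd_differentiable[OF g_smooth x])

lemma cov_differentiable:
  fixes g :: "real^'n \<Rightarrow> 'n \<Rightarrow> 'n \<Rightarrow> real"
  assumes "open U" and "\<And>i j. smooth_on U (\<lambda>x. g x i j)"
    and "\<And>x. x \<in> U \<Longrightarrow> det (\<chi> i j. g x i j) \<noteq> 0" and x: "x \<in> U"
    and T_smooth: "\<And>is. smooth_on U (\<lambda>y. T y is)"
  shows "(\<lambda>y. cov g T y is j) differentiable (at x)"
  unfolding cov_def
  by (intro differentiable_mult differentiable_sum ballI finite finite_lessThan
      christoffel_differentiable[OF assms(1-4)] differentiable_diff
      smooth_on_pd_differentiable[OF T_smooth x] smooth_on_differentiable[OF T_smooth x])

lemma symz_differentiable: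
  assumes "\<And>js. (\<lambda>y. G y js) differentiable (at x)"
  shows "(\<lambda>y. symz (G y) is) differentiable (at x)"
  unfolding symz_def
  by (intro differentiable_mult differentiable_const differentiable_sum ballI
      finite_permutations finite_lessThan assms)

lemma symcov_differentiable:
  fixes g :: "real^'n \<Rightarrow> 'n \<Rightarrow> 'n \<Rightarrow> real"
  assumes "open U" and "\<And>i j. smooth_on U (\<lambda>x. g x i j)"
    and "\<And>x. x \<in> U \<Longrightarrow> det (\<chi> i j. g x i j) \<noteq> 0" and "x \<in> U"
    and "\<And>is. smooth_on U (\<lambda>y. T y is)"
  shows "(\<lambda>y. symcov g T y is) differentiable (at x)"
  unfolding symcov_def by (intro symz_differentiable cov_differentiable[OF assms])

lemma has_real_derivative_pd_chain:
  fixes f :: "real^'n \<Rightarrow> real"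
  assumes f: "f differentiable (at (q t))" and q: "(q has_vector_derivative w) (at t)"
  shows "((\<lambda>\<tau>. f (q \<tau>)) has_real_derivative (\<Sum>j\<in>UNIV. w $ j * pd f j (q t))) (at t)"
proof -
  let ?f' = "frechet_derivative f (at (q t))"
  have "(f has_derivative ?f') (at (q t))"
    using f frechet_derivative_works by blast
  then have lin: "linear ?f'" and "((\<lambda>\<tau>. f (q \<tau>)) has_derivative (\<lambda>h. ?f' (h *\<^sub>R w))) (at t)"
    using has_derivative_compose[of q "\<lambda>h. h *\<^sub>R w"] q has_derivative_linear
    by (auto simp: has_vector_derivative_def o_def)
  moreover have "?f' (h *\<^sub>R w) = ?f' w * h" for h
    using lin by (simp add: linear_scale)
  ultimately have "((\<lambda>\<tau>. f (q \<tau>)) has_real_derivative ?f' w) (at t)"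
    by (simp add: has_field_derivative_def)
  moreover have "?f' w = ?f' (\<Sum>j\<in>UNIV. w $ j *\<^sub>R axis j 1)"
    using basis_expansion[of w] by (simp add: scalar_mult_eq_scaleR)
  also have "\<dots> = (\<Sum>j\<in>UNIV. w $ j * ?f' (axis j 1))"
    using lin by (simp add: linear_sum linear_scale)
  ultimately show ?thesis by (simp add: pd_def)
qed

lemma has_real_derivative_vec_nth:
  assumes "(v has_vector_derivative a) (at t)"
  shows "((\<lambda>\<tau>. v \<tau> $ i) has_real_derivative a $ i) (at t)"
  using bounded_linear.has_vector_derivative[OF bounded_linear_vec_nth assms]
  by (simp add: has_real_derivative_iff_has_vector_derivative)

definition coord_prod :: "real^'n \<Rightarrow> 'n list \<Rightarrow> real" where
  "coord_prod w is = prod_list (map (\<lambda>i. w $ i) is)"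

definition remove_at :: "nat \<Rightarrow> 'a list \<Rightarrow> 'a list" where
  "remove_at k xs = take k xs @ drop (Suc k) xs"

definition insert_at :: "nat \<Rightarrow> 'a \<Rightarrow> 'a list \<Rightarrow> 'a list" where
  "insert_at k c xs = take k xs @ c # drop k xs"

definition coord_prod_deriv :: "real^'n \<Rightarrow> real^'n \<Rightarrow> 'n list \<Rightarrow> real" where
  "coord_prod_deriv w a is = (\<Sum>k<length is. a $ (is ! k) * coord_prod w (remove_at k is))"

lemma coord_prod_simps [simp]:
  "coord_prod w [] = 1"
  "coord_prod w (i # is) = w $ i * coord_prod w is"
  by (simp_all add: coord_prod_def)

lemma coord_prod_append: "coord_prod w (xs @ ys) = coord_prod w xs * coord_prod w ys"
  by (simp add: coord_prod_def)

lemma coord_prod_mset_eq: "mset xs = mset ys \<Longrightarrow> coord_prod w xs = coord_prod w ys"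
  unfolding coord_prod_def by (metis mset_map prod_mset_prod_list)

lemma remove_at_Cons [simp]:
  "remove_at 0 (i # is) = is"
  "remove_at (Suc k) (i # is) = i # remove_at k is"
  by (simp_all add: remove_at_def)

lemma length_insert_at [simp]: "k \<le> length xs \<Longrightarrow> length (insert_at k c xs) = Suc (length xs)"
  by (simp add: insert_at_def)

lemma remove_at_insert_at [simp]: "k \<le> length xs \<Longrightarrow> remove_at k (insert_at k c xs) = xs"
  by (simp add: insert_at_def remove_at_def)

lemma length_remove_at [simp]: "k < length xs \<Longrightarrow> length (remove_at k xs) = length xs - 1"
  by (simp add: remove_at_def)

lemma nth_insert_at [simp]: "k \<le> length xs \<Longrightarrow> insert_at k c xs ! k = c"
  by (simp add: insert_at_def nth_append)

lemma insert_at_remove_at: "k < length ys \<Longrightarrow> insert_at k (ys ! k) (remove_at k ys) = ys"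
  by (simp add: insert_at_def remove_at_def min_def id_take_nth_drop[symmetric])

lemma list_update_insert_at [simp]:
  "k \<le> length xs \<Longrightarrow> (insert_at k c xs)[k := d] = insert_at k d xs"
  by (simp add: insert_at_def list_update_append)

lemma mset_insert_at: "mset (insert_at k c xs) = mset (xs @ [c])"
proof -
  have "mset (take k xs) + mset (drop k xs) = mset xs"
    by (metis append_take_drop_id mset_append)
  then show ?thesis by (simp add: insert_at_def)
qed

lemma coord_prod_insert_at: "coord_prod w (insert_at k c xs) = w $ c * coord_prod w xs"
  using coord_prod_mset_eq[OF mset_insert_at] by (simp add: coord_prod_append mult.commute)

lemma coord_prod_deriv_Cons:
  "coord_prod_deriv w a (i # is) = a $ i * coord_prod w is + w $ i * coord_prod_deriv w a is"
  unfolding coord_prod_deriv_def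
  by (simp only: length_Cons sum.lessThan_Suc_shift) (simp add: sum_distrib_left mult.left_commute)

lemma has_real_derivative_coord_prod:
  assumes "(v has_vector_derivative a) (at t)"
  shows "((\<lambda>\<tau>. coord_prod (v \<tau>) is) has_real_derivative coord_prod_deriv (v t) a is) (at t)"
proof (induction "is")
  case Nil
  then show ?case by (simp add: coord_prod_deriv_def)
next
  case (Cons i "is")
  from DERIV_mult[OF has_real_derivative_vec_nth[OF assms] Cons] show ?case
    by (simp add: coord_prod_deriv_Cons mult.commute)
qed

lemma sum_lists_insert_at:
  fixes f :: "'n::finite list \<Rightarrow> 'a::comm_monoid_add"
  assumes "k \<le> r"
  shows "(\<Sum>is | length is = Suc r. f is) = (\<Sum>is | length is = r. \<Sum>c\<in>UNIV. f (insert_at k c is))"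
proof -
  have "(\<Sum>is | length is = r. \<Sum>c\<in>UNIV. f (insert_at k c is)) =
        (\<Sum>p \<in> {is. length is = r} \<times> UNIV. f (insert_at k (snd p) (fst p)))"
    by (simp add: sum.cartesian_product split_beta)
  also have "\<dots> = (\<Sum>is | length is = Suc r. f is)"
    by (rule sum.reindex_bij_witness[where i = "\<lambda>is. (remove_at k is, is ! k)"
          and j = "\<lambda>p. insert_at k (snd p) (fst p)"])
      (use assms in \<open>auto simp: insert_at_remove_at\<close>)
  finally show ?thesis by simp
qed

lemma contr_coord_prod: "contr r T w = (\<Sum>is | length is = r. T is * coord_prod w is)"
  by (simp add: contr_def coord_prod_def)

lemma contr_0: "contr 0 T w = T []"
  by (simp add: contr_coord_prod)

lemma contr_Suc_last:
  "contr (Suc r) T w = (\<Sum>is | length is = r. \<Sum>j\<in>UNIV. T (is @ [j]) * (coord_prod w is * w $ j))"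
  unfolding contr_coord_prod
  by (subst sum_lists_insert_at[where k=r])
    (auto intro!: sum.cong simp: insert_at_def coord_prod_append)

lemma contr_1: "contr 1 T w = (\<Sum>j\<in>UNIV. T [j] * w $ j)"
  by (simp add: contr_Suc_last)

lemma contr_cong_linear:
  assumes "\<And>is. length is = r \<Longrightarrow> T is = \<alpha> * T1 is + \<beta> * T2 is"
  shows "contr r T w = \<alpha> * contr r T1 w + \<beta> * contr r T2 w"
  unfolding contr_coord_prod using assms
  by (simp add: sum_distrib_left sum.distrib[symmetric] algebra_simps)

lemma has_real_derivative_contr:
  fixes T :: "real^'n \<Rightarrow> 'n list \<Rightarrow> real"
  assumes q: "(q has_vector_derivative v t) (at t)" and v: "(v has_vector_derivative a) (at t)"
    and T_diff: "\<And>is. length is = r \<Longrightarrow> (\<lambda>y. T y is) differentiable (at (q t))"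
  shows "((\<lambda>\<tau>. contr r (T (q \<tau>)) (v \<tau>)) has_real_derivative
     (\<Sum>is | length is = r. (\<Sum>j\<in>UNIV. v t $ j * pd (\<lambda>y. T y is) j (q t)) * coord_prod (v t) is
        + T (q t) is * coord_prod_deriv (v t) a is)) (at t)"
  unfolding contr_coord_prod
  by (rule DERIV_sum, rule DERIV_mult[OF has_real_derivative_pd_chain[OF T_diff q]
        has_real_derivative_coord_prod[OF v], THEN DERIV_cong]) auto

lemma sum_contract_acceleration:
  fixes G :: "'n::finite \<Rightarrow> 'n \<Rightarrow> 'n \<Rightarrow> real" and T Q :: "'n \<Rightarrow> real"
  shows "(\<Sum>c\<in>UNIV. T c * ((\<chi> b. - (\<Sum>c\<in>UNIV. \<Sum>d\<in>UNIV. G b c d * w $ c * w $ d) - Q b) $ c * p))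
    = - (\<Sum>b\<in>UNIV. \<Sum>j\<in>UNIV. (\<Sum>d\<in>UNIV. G d b j * T d) * (w $ b * p * w $ j))
      - (\<Sum>c\<in>UNIV. T c * Q c * p)"
proof -
  have "(\<Sum>c\<in>UNIV. T c * ((\<chi> b. - (\<Sum>c\<in>UNIV. \<Sum>d\<in>UNIV. G b c d * w $ c * w $ d) - Q b) $ c * p))
      = - (\<Sum>c\<in>UNIV. \<Sum>b\<in>UNIV. \<Sum>j\<in>UNIV. T c * G c b j * w $ b * w $ j * p)
        - (\<Sum>c\<in>UNIV. T c * Q c * p)"
    by (simp add: algebra_simps sum_distrib_left sum_distrib_right sum_subtractf sum_negf)
  also have "(\<Sum>c\<in>UNIV. \<Sum>b\<in>UNIV. \<Sum>j\<in>UNIV. T c * G c b j * w $ b * w $ j * p)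
      = (\<Sum>b\<in>UNIV. \<Sum>c\<in>UNIV. \<Sum>j\<in>UNIV. T c * G c b j * w $ b * w $ j * p)"
    by (rule sum.swap)
  also have "\<dots> = (\<Sum>b\<in>UNIV. \<Sum>j\<in>UNIV. \<Sum>c\<in>UNIV. T c * G c b j * w $ b * w $ j * p)"
    by (rule sum.cong[OF refl], rule sum.swap)
  also have "\<dots> = (\<Sum>b\<in>UNIV. \<Sum>j\<in>UNIV. (\<Sum>d\<in>UNIV. G d b j * T d) * (w $ b * p * w $ j))"
    by (auto intro!: sum.cong simp: sum_distrib_left sum_distrib_right mult_ac)
  finally show ?thesis .
qed

lemma sum_acceleration_insert_at:
  fixes G :: "'n::finite \<Rightarrow> 'n \<Rightarrow> 'n \<Rightarrow> real" and T :: "'n list \<Rightarrow> real"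
    and Q :: "'n \<Rightarrow> real" and w :: "real^'n"
  defines "a \<equiv> (\<chi> b. - (\<Sum>c\<in>UNIV. \<Sum>d\<in>UNIV. G b c d * w $ c * w $ d) - Q b)"
  assumes k: "k \<le> r"
  shows "(\<Sum>is | length is = Suc r. T is * (a $ (is ! k) * coord_prod w (remove_at k is)))
    = - (\<Sum>is | length is = Suc r. \<Sum>j\<in>UNIV.
           (\<Sum>d\<in>UNIV. G d (is ! k) j * T (is[k := d])) * (coord_prod w is * w $ j))
      - (\<Sum>is | length is = r. \<Sum>c\<in>UNIV. T (insert_at k c is) * Q c * coord_prod w is)"
proof -
  have lhs: "(\<Sum>is | length is = Suc r. T is * (a $ (is ! k) * coord_prod w (remove_at k is)))
      = (\<Sum>is | length is = r. \<Sum>c\<in>UNIV. T (insert_at k c is) * (a $ c * coord_prod w is))"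
    by (subst sum_lists_insert_at[OF k]) (use k in \<open>auto intro!: sum.cong\<close>)
  have christoffel_part: "(\<Sum>is | length is = Suc r. \<Sum>j\<in>UNIV.
           (\<Sum>d\<in>UNIV. G d (is ! k) j * T (is[k := d])) * (coord_prod w is * w $ j))
      = (\<Sum>is | length is = r. \<Sum>b\<in>UNIV. \<Sum>j\<in>UNIV.
           (\<Sum>d\<in>UNIV. G d b j * T (insert_at k d is)) * (w $ b * coord_prod w is * w $ j))"
    by (subst sum_lists_insert_at[OF k]) (use k in \<open>auto intro!: sum.cong simp: coord_prod_insert_at\<close>)
  show ?thesis
    unfolding lhs christoffel_part unfolding a_def sum_contract_acceleration
    by (simp add: sum_subtractf sum_negf)
qed

lemma contr_derivative_cov_identity:
  fixes T :: "real^'n \<Rightarrow> 'n list \<Rightarrow> real" and g :: "real^'n \<Rightarrow> 'n \<Rightarrow> 'n \<Rightarrow> real"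
    and Q :: "real^'n \<Rightarrow> 'n \<Rightarrow> real" and x w :: "real^'n"
  defines "a \<equiv> (\<chi> b. - (\<Sum>c\<in>UNIV. \<Sum>d\<in>UNIV. christoffel g x b c d * w $ c * w $ d) - Q x b)"
  shows "(\<Sum>is | length is = Suc r. (\<Sum>j\<in>UNIV. w $ j * pd (\<lambda>y. T y is) j x) * coord_prod w is
            + T x is * coord_prod_deriv w a is)
    = contr (Suc (Suc r)) (\<lambda>js. cov g T x (butlast js) (last js)) w
      - (\<Sum>k<Suc r. \<Sum>is | length is = r. \<Sum>c\<in>UNIV. T x (insert_at k c is) * Q x c * coord_prod w is)"
proof -
  define D where
    "D = (\<Sum>is | length is = Suc r. \<Sum>j\<in>UNIV. pd (\<lambda>y. T y is) j x * (coord_prod w is * w $ j))"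
  define \<Gamma> where "\<Gamma> k = (\<Sum>is | length is = Suc r. \<Sum>j\<in>UNIV.
      (\<Sum>d\<in>UNIV. christoffel g x d (is ! k) j * T x (is[k := d])) * (coord_prod w is * w $ j))" for k
  define A where
    "A k = (\<Sum>is | length is = Suc r. T x is * (a $ (is ! k) * coord_prod w (remove_at k is)))" for k
  define QT where
    "QT k = (\<Sum>is | length is = r. \<Sum>c\<in>UNIV. T x (insert_at k c is) * Q x c * coord_prod w is)" for k
  have lhs: "(\<Sum>is | length is = Suc r. (\<Sum>j\<in>UNIV. w $ j * pd (\<lambda>y. T y is) j x) * coord_prod w is
            + T x is * coord_prod_deriv w a is) = D + (\<Sum>k<Suc r. A k)"
    unfolding D_def A_def coord_prod_deriv_def sum.distrib
    by (subst sum.swap[where A="{..<Suc r}"])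
      (auto intro!: sum.cong simp: sum_distrib_left sum_distrib_right algebra_simps)
  have rhs: "contr (Suc (Suc r)) (\<lambda>js. cov g T x (butlast js) (last js)) w = D - (\<Sum>k<Suc r. \<Gamma> k)"
    unfolding contr_Suc_last D_def \<Gamma>_def cov_def
    by (simp add: left_diff_distrib sum_subtractf sum_distrib_right
        sum.swap[where B="{..<Suc r}"] del: sum.lessThan_Suc)
  have "A k = - \<Gamma> k - QT k" if "k < Suc r" for k
    unfolding A_def \<Gamma>_def QT_def a_def using that
    by (intro sum_acceleration_insert_at) simp
  then have "(\<Sum>k<Suc r. A k) = - (\<Sum>k<Suc r. \<Gamma> k) - (\<Sum>k<Suc r. QT k)"
    by (simp add: sum_subtractf sum_negf)
  with lhs rhs show ?thesis
    unfolding QT_def by simp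
qed

lemma sum_lists_permute_list:
  fixes f :: "'n::finite list \<Rightarrow> 'a::comm_monoid_add"
  assumes s: "s permutes {..<p}"
  shows "(\<Sum>is | length is = p. f (permute_list s is)) = (\<Sum>is | length is = p. f is)"
proof (rule sum.reindex_bij_witness[where i = "permute_list (inv s)" and j = "permute_list s"])
  have s': "inv s permutes {..<p}"
    using s permutes_inv by blast
  fix xs :: "'n list"
  assume "xs \<in> {is. length is = p}"
  then have l: "length xs = p" by simp
  show "permute_list (inv s) (permute_list s xs) = xs"
    using permute_list_compose[of "inv s" xs s] s' l permutes_inv_o(1)[OF s] by simp
  show "permute_list s (permute_list (inv s) xs) = xs"
    using permute_list_compose[of s xs "inv s"] s l permutes_inv_o(2)[OF s] by simp
  show "permute_list s xs \<in> {is. length is = p}" "permute_list (inv s) xs \<in> {is. length is = p}"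
    using l by simp_all
qed simp

lemma contr_symz: "contr p (symz T) w = contr p T w"
proof -
  let ?S = "{s. s permutes {..<p}}"
  have "contr p (symz T) w
      = (\<Sum>is | length is = p. (1 / fact p) * (\<Sum>s\<in>?S. T (permute_list s is)) * coord_prod w is)"
    unfolding contr_coord_prod symz_def permute_list_def by (auto intro!: sum.cong)
  also have "\<dots> = (1 / fact p) *
      (\<Sum>s\<in>?S. \<Sum>is | length is = p. T (permute_list s is) * coord_prod w (permute_list s is))"
    by (subst sum.swap)
      (auto intro!: sum.cong coord_prod_mset_eq simp: sum_distrib_left sum_distrib_right mult_ac)
  also have "\<dots> = (1 / fact p) * (\<Sum>s\<in>?S. contr p T w)"
    using sum_lists_permute_list[where f = "\<lambda>is. T is * coord_prod w is"]
    by (simp add: contr_coord_prod)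
  also have "\<dots> = contr p T w"
    by (simp add: card_permutations)
  finally show ?thesis .
qed

lemma sum_insert_at_symmetric:
  assumes sym: "\<And>is js. length is = Suc r \<Longrightarrow> mset js = mset is \<Longrightarrow> T js = T is"
  shows "(\<Sum>k<Suc r. \<Sum>is | length is = r. \<Sum>c\<in>UNIV. T (insert_at k c is) * Q c * coord_prod w is)
     = real (Suc r) * contr r (\<lambda>is. \<Sum>c\<in>UNIV. T (is @ [c]) * Q c) w"
proof -
  have "T (insert_at k c is) = T (is @ [c])" if "length is = r" for k c "is"
    using sym mset_insert_at that by (metis length_append_singleton)
  then have "(\<Sum>k<Suc r. \<Sum>is | length is = r. \<Sum>c\<in>UNIV. T (insert_at k c is) * Q c * coord_prod w is)
     = (\<Sum>k<Suc r. \<Sum>is | length is = r. \<Sum>c\<in>UNIV. T (is @ [c]) * Q c * coord_prod w is)"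
    by (auto intro!: sum.cong)
  then show ?thesis
    by (simp add: contr_coord_prod sum_distrib_right)
qed

lemma solution_in_domain: "is_solution g Q U J q v \<Longrightarrow> \<tau> \<in> J \<Longrightarrow> q \<tau> \<in> U"
  unfolding is_solution_def by blast

lemma has_real_derivative_contr_solution:
  fixes T :: "real^'n \<Rightarrow> 'n list \<Rightarrow> real"
  assumes sol: "is_solution g Q U J q v" and t: "t \<in> J"
    and T_diff: "\<And>is. length is = Suc r \<Longrightarrow> (\<lambda>y. T y is) differentiable (at (q t))"
    and T_sym: "totally_symmetric U (Suc r) T"
  shows "((\<lambda>\<tau>. contr (Suc r) (T (q \<tau>)) (v \<tau>)) has_real_derivative
      contr (Suc (Suc r)) (symcov g T (q t)) (v t)
        - real (Suc r) * contr r (\<lambda>is. \<Sum>c\<in>UNIV. T (q t) (is @ [c]) * Q (q t) c) (v t)) (at t)"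
proof -
  have x: "q t \<in> U"
    using solution_in_domain[OF sol t] .
  have q: "(q has_vector_derivative v t) (at t)"
    and v: "(v has_vector_derivative (\<chi> a. - (\<Sum>b\<in>UNIV. \<Sum>c\<in>UNIV.
              christoffel g (q t) a b c * v t $ b * v t $ c) - Q (q t) a)) (at t)"
    using sol t unfolding is_solution_def by blast+
  have sym: "T (q t) js = T (q t) is" if "length is = Suc r" "mset js = mset is" for "is" js
    using T_sym x that unfolding totally_symmetric_def by blast
  have "symcov g T (q t) = symz (\<lambda>js. cov g T (q t) (butlast js) (last js))"
    by (simp add: symcov_def fun_eq_iff)
  moreover note sum_insert_at_symmetric[OF sym, where Q = "Q (q t)" and w = "v t"]
  ultimately show ?thesis
    by (intro DERIV_cong[OF has_real_derivative_contr[where r = "Suc r", OF q v T_diff]])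
      (simp_all add: contr_derivative_cov_identity contr_symz del: sum.lessThan_Suc)
qed

lemma exp_mult_constant_on_interval:
  fixes f :: "real \<Rightarrow> real"
  assumes J: "is_interval J"
    and f: "\<And>\<tau>. \<tau> \<in> J \<Longrightarrow> (f has_real_derivative - c * f \<tau>) (at \<tau>)"
    and "s \<in> J" "t \<in> J"
  shows "exp (c * s) * f s = exp (c * t) * f t"
proof -
  have "((\<lambda>\<tau>. exp (c * \<tau>) * f \<tau>) has_real_derivative 0) (at \<tau> within J)" if "\<tau> \<in> J" for \<tau>
  proof -
    have "((\<lambda>\<tau>. exp (c * \<tau>)) has_real_derivative exp (c * \<tau>) * c) (at \<tau>)"
      by (auto intro!: derivative_eq_intros)
    from DERIV_mult[OF this f[OF that]] show ?thesis
      by (auto intro: has_field_derivative_at_within elim: DERIV_cong simp: algebra_simps)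
  qed
  then obtain k where "\<forall>\<tau>\<in>J. exp (c * \<tau>) * f \<tau> = k"
    using has_field_derivative_zero_constant[OF is_interval_convex[OF J]] by blast
  with \<open>s \<in> J\<close> \<open>t \<in> J\<close> show ?thesis by simp
qed

lemma sum_atLeastAtMost_1_Suc_Suc:
  fixes f :: "nat \<Rightarrow> 'a::comm_monoid_add"
  shows "(\<Sum>r=1..N+2. f r) = f 1 + f 2 + (\<Sum>r=1..N. f (r + 2))"
  by (induction N) (simp_all add: numeral_2_eq_2 add_ac)

(* S r, C r and LQ r stand for the contractions of L_{(i1..ir;i)}, L_{i1..ir} and L_{i1..i(r-1)c} Q^c
   with the velocity; top, mid and bot are the three hypotheses on L contracted with it, for m = N + 3. *)
lemma telescoping_cancellation:
  fixes S C LQ :: "nat \<Rightarrow> real"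
  assumes top: "lam * S (N + 1) = - real (N + 3) * KQ - lam^2 * C (N + 2)"
    and mid: "\<And>r. 1 \<le> r \<Longrightarrow> r \<le> N \<Longrightarrow> S r = real (r + 2) * LQ (r + 2) - lam * C (r + 1)"
    and bot: "B = 2 * lam * LQ 2 - lam^2 * C 1"
  shows "real (N + 3) * KQ + lam * (\<Sum>r=1..N+2. S r - real r * LQ r) + B
       = - lam * (- S (N + 2) + lam * (\<Sum>r=1..N+2. C r) + LQ 1)"
proof -
  have sum_S: "(\<Sum>r=1..N+2. S r) = (\<Sum>r=1..N. real (r + 2) * LQ (r + 2)) - lam * (\<Sum>r=1..N. C (r + 1))
      + S (N + 1) + S (N + 2)"
    using mid by (simp add: sum_subtractf sum_distrib_left)
  have sum_LQ: "(\<Sum>r=1..N+2. real r * LQ r) = LQ 1 + 2 * LQ 2 + (\<Sum>r=1..N. real (r + 2) * LQ (r + 2))"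
    using sum_atLeastAtMost_1_Suc_Suc[of "\<lambda>r. real r * LQ r" N] by simp
  have sum_C: "(\<Sum>r=1..N+2. C r) = C 1 + (\<Sum>r=1..N. C (r + 1)) + C (N + 2)"
    by (induction N) (simp_all add: add_ac)
  show ?thesis
    unfolding sum_subtractf sum_S sum_LQ sum_C using top bot by algebra
qed

locale killing_first_integral =
  fixes g :: "real^'n \<Rightarrow> 'n \<Rightarrow> 'n \<Rightarrow> real"
    and Q :: "real^'n \<Rightarrow> 'n \<Rightarrow> real"
    and L :: "nat \<Rightarrow> real^'n \<Rightarrow> 'n list \<Rightarrow> real"
    and U :: "(real^'n) set" and m :: nat and lam :: real
  assumes U_open: "open U"
    and g_smooth: "\<And>i j. smooth_on U (\<lambda>x. g x i j)"
    and g_nondeg: "\<And>x. x \<in> U \<Longrightarrow> det (\<chi> i j. g x i j) \<noteq> 0"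
    and Q_smooth: "\<And>a. smooth_on U (\<lambda>x. Q x a)"
    and m3: "m \<ge> 3" and lam: "lam \<noteq> 0"
    and L_smooth: "\<And>r is. 1 \<le> r \<Longrightarrow> r \<le> m - 1 \<Longrightarrow> smooth_on U (\<lambda>x. L r x is)"
    and L_sym: "\<And>r. 1 \<le> r \<Longrightarrow> r \<le> m - 1 \<Longrightarrow> totally_symmetric U r (L r)"
    and killing: "killing_tensor g U m (symcov g (L (m - 1)))"
    and eq_top: "\<And>x is. x \<in> U \<Longrightarrow> length is = m - 1 \<Longrightarrow>
        symcov g (L (m - 2)) x is =
          - (real m / lam) * (\<Sum>c\<in>UNIV. symcov g (L (m - 1)) x (is @ [c]) * Q x c)
          - lam * L (m - 1) x is"
    and eq_mid: "\<And>r x is. 2 \<le> r \<Longrightarrow> r \<le> m - 2 \<Longrightarrow> x \<in> U \<Longrightarrow> length is = r \<Longrightarrow>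
        symcov g (L (r - 1)) x is =
          real (r + 1) * (\<Sum>c\<in>UNIV. L (r + 1) x (is @ [c]) * Q x c) - lam * L r x is"
    and eq_bot: "\<And>x i. x \<in> U \<Longrightarrow>
        pd (\<lambda>y. \<Sum>c\<in>UNIV. L 1 y [c] * Q y c) i x =
          2 * lam * (\<Sum>c\<in>UNIV. L 2 x [i, c] * Q x c) - lam^2 * L 1 x [i]"
begin

definition first_integral_bracket :: "real^'n \<Rightarrow> real^'n \<Rightarrow> real" where
  "first_integral_bracket x w = - contr m (symcov g (L (m - 1)) x) w
     + lam * (\<Sum>r=1..m-1. contr r (L r x) w) + (\<Sum>c\<in>UNIV. L 1 x [c] * Q x c)"

lemma contr_eq_top:
  assumes "x \<in> U"
  shows "lam * contr (m - 1) (symcov g (L (m - 2)) x) w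
    = - real m * contr (m - 1) (\<lambda>is. \<Sum>c\<in>UNIV. symcov g (L (m - 1)) x (is @ [c]) * Q x c) w
      - lam^2 * contr (m - 1) (L (m - 1) x) w"
proof -
  have "contr (m - 1) (symcov g (L (m - 2)) x) w
      = - (real m / lam) * contr (m - 1) (\<lambda>is. \<Sum>c\<in>UNIV. symcov g (L (m - 1)) x (is @ [c]) * Q x c) w
        + (- lam) * contr (m - 1) (L (m - 1) x) w"
    by (rule contr_cong_linear) (simp add: eq_top[OF assms])
  then show ?thesis
    using lam by (simp add: field_simps power2_eq_square)
qed

lemma contr_eq_mid:
  assumes "2 \<le> r" "r \<le> m - 2" "x \<in> U"
  shows "contr r (symcov g (L (r - 1)) x) w
    = real (r + 1) * contr r (\<lambda>is. \<Sum>c\<in>UNIV. L (r + 1) x (is @ [c]) * Q x c) w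
      - lam * contr r (L r x) w"
proof -
  have "contr r (symcov g (L (r - 1)) x) w
      = real (r + 1) * contr r (\<lambda>is. \<Sum>c\<in>UNIV. L (r + 1) x (is @ [c]) * Q x c) w
        + (- lam) * contr r (L r x) w"
    by (rule contr_cong_linear) (use eq_mid[OF assms] in simp)
  then show ?thesis by simp
qed

lemma pd_boundary_term_contr:
  assumes "x \<in> U"
  shows "(\<Sum>j\<in>UNIV. w $ j * pd (\<lambda>y. \<Sum>c\<in>UNIV. L 1 y [c] * Q y c) j x)
    = 2 * lam * contr 1 (\<lambda>is. \<Sum>c\<in>UNIV. L 2 x (is @ [c]) * Q x c) w - lam^2 * contr 1 (L 1 x) w"
  unfolding contr_1 eq_bot[OF assms]
  by (simp add: algebra_simps sum_distrib_left sum_subtractf)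

lemma has_real_derivative_killing_term:
  assumes sol: "is_solution g Q U J q v" and \<tau>: "\<tau> \<in> J"
  shows "((\<lambda>\<tau>. contr m (symcov g (L (m - 1)) (q \<tau>)) (v \<tau>)) has_real_derivative
      - real m * contr (m - 1) (\<lambda>is. \<Sum>c\<in>UNIV. symcov g (L (m - 1)) (q \<tau>) (is @ [c]) * Q (q \<tau>) c)
          (v \<tau>)) (at \<tau>)"
proof -
  let ?K = "symcov g (L (m - 1))"
  have x: "q \<tau> \<in> U" and m: "Suc (m - 1) = m"
    using solution_in_domain[OF sol \<tau>] m3 by auto
  have K_diff: "(\<lambda>y. ?K y is) differentiable (at (q \<tau>))" for "is"
    using m3 by (intro symcov_differentiable[OF U_open g_smooth g_nondeg x] L_smooth) auto
  have K_sym: "totally_symmetric U (Suc (m - 1)) ?K"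
    using killing m by (simp add: killing_tensor_def)
  have "contr (Suc m) (symcov g ?K (q \<tau>)) (v \<tau>) = 0"
    using killing x by (simp add: killing_tensor_def contr_coord_prod)
  with has_real_derivative_contr_solution[OF sol \<tau> K_diff K_sym] show ?thesis
    unfolding m by (auto elim: DERIV_cong)
qed

lemma has_real_derivative_L_term:
  assumes sol: "is_solution g Q U J q v" and \<tau>: "\<tau> \<in> J" and r: "1 \<le> r" "r \<le> m - 1"
  shows "((\<lambda>\<tau>. contr r (L r (q \<tau>)) (v \<tau>)) has_real_derivative
      contr (Suc r) (symcov g (L r) (q \<tau>)) (v \<tau>)
        - real r * contr (r - 1) (\<lambda>is. \<Sum>c\<in>UNIV. L r (q \<tau>) (is @ [c]) * Q (q \<tau>) c) (v \<tau>)) (at \<tau>)"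
proof -
  obtain r' where r': "r = Suc r'"
    using r by (cases r) auto
  have "(\<lambda>y. L r y is) differentiable (at (q \<tau>))" for "is"
    using smooth_on_differentiable[OF L_smooth[OF r] solution_in_domain[OF sol \<tau>]] .
  with has_real_derivative_contr_solution[OF sol \<tau>, of r' "L r"] L_sym[OF r] show ?thesis
    by (simp add: r')
qed

lemma has_real_derivative_boundary_term:
  assumes sol: "is_solution g Q U J q v" and \<tau>: "\<tau> \<in> J"
  shows "((\<lambda>\<tau>. \<Sum>c\<in>UNIV. L 1 (q \<tau>) [c] * Q (q \<tau>) c) has_real_derivative
      (\<Sum>j\<in>UNIV. v \<tau> $ j * pd (\<lambda>y. \<Sum>c\<in>UNIV. L 1 y [c] * Q y c) j (q \<tau>))) (at \<tau>)"
proof (rule has_real_derivative_pd_chain)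
  have x: "q \<tau> \<in> U"
    using solution_in_domain[OF sol \<tau>] .
  show "(\<lambda>y. \<Sum>c\<in>UNIV. L 1 y [c] * Q y c) differentiable (at (q \<tau>))"
    using m3 by (intro differentiable_sum differentiable_mult ballI finite
        smooth_on_differentiable[OF Q_smooth x] smooth_on_differentiable[OF L_smooth x]) auto
  show "(q has_vector_derivative v \<tau>) (at \<tau>)"
    using sol \<tau> unfolding is_solution_def by blast
qed

lemma first_integral_bracket_derivative_identity:
  assumes x: "x \<in> U"
  shows "real m * contr (m - 1) (\<lambda>is. \<Sum>c\<in>UNIV. symcov g (L (m - 1)) x (is @ [c]) * Q x c) w
      + lam * (\<Sum>r=1..m-1. contr (Suc r) (symcov g (L r) x) w
                 - real r * contr (r - 1) (\<lambda>is. \<Sum>c\<in>UNIV. L r x (is @ [c]) * Q x c) w)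
      + (\<Sum>j\<in>UNIV. w $ j * pd (\<lambda>y. \<Sum>c\<in>UNIV. L 1 y [c] * Q y c) j x)
    = - lam * first_integral_bracket x w"
proof -
  obtain N where N: "m = N + 3"
    using m3 by (metis add.commute le_iff_add)
  define S where "S r = contr (Suc r) (symcov g (L r) x) w" for r
  define C where "C r = contr r (L r x) w" for r
  define LQ where "LQ r = contr (r - 1) (\<lambda>is. \<Sum>c\<in>UNIV. L r x (is @ [c]) * Q x c) w" for r
  define KQ where
    "KQ = contr (m - 1) (\<lambda>is. \<Sum>c\<in>UNIV. symcov g (L (m - 1)) x (is @ [c]) * Q x c) w"
  define B where "B = (\<Sum>j\<in>UNIV. w $ j * pd (\<lambda>y. \<Sum>c\<in>UNIV. L 1 y [c] * Q y c) j x)"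
  have "lam * S (N + 1) = - real (N + 3) * KQ - lam^2 * C (N + 2)"
    using contr_eq_top[OF x, of w] N by (simp add: S_def C_def KQ_def numeral_3_eq_3)
  moreover have "S r = real (r + 2) * LQ (r + 2) - lam * C (r + 1)" if "1 \<le> r" "r \<le> N" for r
    using contr_eq_mid[of "r + 1", OF _ _ x] that N by (simp add: S_def C_def LQ_def)
  moreover have "B = 2 * lam * LQ 2 - lam^2 * C 1"
    using pd_boundary_term_contr[OF x] by (simp add: B_def LQ_def C_def)
  ultimately have "real (N + 3) * KQ + lam * (\<Sum>r=1..N+2. S r - real r * LQ r) + B
      = - lam * (- S (N + 2) + lam * (\<Sum>r=1..N+2. C r) + LQ 1)"
    by (rule telescoping_cancellation)
  moreover have "first_integral_bracket x w = - S (N + 2) + lam * (\<Sum>r=1..N+2. C r) + LQ 1"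
    unfolding first_integral_bracket_def S_def C_def LQ_def using N
    by (simp add: contr_0 numeral_3_eq_3)
  ultimately show ?thesis
    using N by (simp add: S_def LQ_def KQ_def B_def)
qed

lemma first_integral_bracket_has_derivative:
  assumes sol: "is_solution g Q U J q v" and \<tau>: "\<tau> \<in> J"
  shows "((\<lambda>\<tau>. first_integral_bracket (q \<tau>) (v \<tau>)) has_real_derivative
      - lam * first_integral_bracket (q \<tau>) (v \<tau>)) (at \<tau>)"
  unfolding first_integral_bracket_derivative_identity[OF solution_in_domain[OF sol \<tau>], symmetric]
  unfolding first_integral_bracket_def
  by (intro DERIV_add DERIV_cmult DERIV_sum has_real_derivative_boundary_term[OF sol \<tau>]
      has_real_derivative_killing_term[OF sol \<tau>, THEN DERIV_minus, THEN DERIV_cong]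
      has_real_derivative_L_term[OF sol \<tau>]) auto

end

theorem theorem1:
  fixes g :: "real^'n \<Rightarrow> 'n \<Rightarrow> 'n \<Rightarrow> real"
    and Q :: "real^'n \<Rightarrow> 'n \<Rightarrow> real"
    and L :: "nat \<Rightarrow> real^'n \<Rightarrow> 'n list \<Rightarrow> real"
    and U :: "(real^'n) set" and m :: nat and lam :: real
  assumes U_open: "open U"
    and g_smooth: "\<And>i j. smooth_on U (\<lambda>x. g x i j)"
    and g_sym: "\<And>x i j. x \<in> U \<Longrightarrow> g x i j = g x j i"
    and g_nondeg: "\<And>x. x \<in> U \<Longrightarrow> det (\<chi> i j. g x i j) \<noteq> 0"
    and Q_smooth: "\<And>a. smooth_on U (\<lambda>x. Q x a)"
    and m3: "m \<ge> 3" and lam: "lam \<noteq> 0"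
    and L_smooth: "\<And>r is. 1 \<le> r \<Longrightarrow> r \<le> m - 1 \<Longrightarrow> smooth_on U (\<lambda>x. L r x is)"
    and L_sym: "\<And>r. 1 \<le> r \<Longrightarrow> r \<le> m - 1 \<Longrightarrow> totally_symmetric U r (L r)"
    and killing: "killing_tensor g U m (symcov g (L (m - 1)))"
    and eq_top: "\<And>x is. x \<in> U \<Longrightarrow> length is = m - 1 \<Longrightarrow>
        symcov g (L (m - 2)) x is =
          - (real m / lam) * (\<Sum>c\<in>UNIV. symcov g (L (m - 1)) x (is @ [c]) * Q x c)
          - lam * L (m - 1) x is"
    and eq_mid: "\<And>r x is. 2 \<le> r \<Longrightarrow> r \<le> m - 2 \<Longrightarrow> x \<in> U \<Longrightarrow> length is = r \<Longrightarrow>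
        symcov g (L (r - 1)) x is =
          real (r + 1) * (\<Sum>c\<in>UNIV. L (r + 1) x (is @ [c]) * Q x c) - lam * L r x is"
    and eq_bot: "\<And>x i. x \<in> U \<Longrightarrow>
        pd (\<lambda>y. \<Sum>c\<in>UNIV. L 1 y [c] * Q y c) i x =
          2 * lam * (\<Sum>c\<in>UNIV. L 2 x [i, c] * Q x c) - lam^2 * L 1 x [i]"
    and J: "is_interval J"
    and sol: "is_solution g Q U J q v"
    and s: "s \<in> J" and t: "t \<in> J"
  shows "(let Ie = (\<lambda>\<tau>. exp (lam * \<tau>) / lam *
              (- contr m (symcov g (L (m - 1)) (q \<tau>)) (v \<tau>)
               + lam * (\<Sum>r=1..m-1. contr r (L r (q \<tau>)) (v \<tau>))
               + (\<Sum>c\<in>UNIV. L 1 (q \<tau>) [c] * Q (q \<tau>) c)))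
         in Ie s = Ie t)"
proof -
  interpret killing_first_integral g Q L U m lam
    by unfold_locales (fact U_open g_smooth g_nondeg Q_smooth m3 lam L_smooth L_sym killing
        eq_top eq_mid eq_bot)+
  have "exp (lam * s) * first_integral_bracket (q s) (v s) = exp (lam * t) * first_integral_bracket (q t) (v t)"
    by (rule exp_mult_constant_on_interval[OF J first_integral_bracket_has_derivative[OF sol] s t])
  then show ?thesis
    unfolding Let_def first_integral_bracket_def[symmetric] by simp
qed

end
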